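(* For $k\ge4$, $\Phi_k(2^{k-1}k\log2,\,x)<0$ for all $x\in[\frac12-\frac1{2^k},\frac12]$.
   Context: $\Phi_k(d,x)=-\log(1-x)-d(1-k^{-1}-d^{-1})\log(1-2x^k)+(d-1)\log(1-x^{k-1})$. *)

theory Defs
  imports Complex_Main
begin

definition Phi :: "nat \<Rightarrow> real \<Rightarrow> real \<Rightarrow> real" where
  "Phi k d x = - ln (1 - x) - d * (1 - 1 / real k - 1 / d) * ln (1 - 2 * x ^ k)
      + (d - 1) * ln (1 - x ^ (k - 1))"

end

theory Submission
  imports Defs
begin

text \<open>
  Write \<open>a = 2 x^k\<close>, \<open>b = x^(k-1)\<close> and \<open>c = d (1 - 1/k - 1/d) \<ge> 0\<close>, so that
  \<open>Phi k d x = - ln (1 - x) - c ln (1 - a) + (d - 1) ln (1 - b)\<close>. Bounding \<open>- ln (1 - y)\<close> above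
  by \<open>y + y\<^sup>2 / (2 (1 - y))\<close> and below by \<open>y + y\<^sup>2 / 2\<close> splits \<open>Phi\<close> into a first-order
  and a second-order part. For \<open>d = 2^(k-1) k ln 2\<close> and \<open>x = (1 - v) / 2\<close> with
  \<open>0 \<le> v \<le> 2^(1-k)\<close>, the first-order part is
  \<open>ln 2 (1 - (1-v)^(k-1) (1 + (k-1) v)) - ln (1 + v) + 2^(1-k) (1-v)^(k-1) v\<close>,
  whose three terms are at most \<open>3v/4\<close>, \<open>-7v/8\<close> and \<open>v/8\<close>. The second-order part is
  negative since \<open>a \<le> b \<le> 2^(1-k)\<close> and \<open>d (1 - 1/k) < (d - 1) (1 - 2^(1-k))\<close>.
\<close>

lemma neg_ln_one_minus_le:
  fixes y :: real
  assumes "0 \<le> y" "y < 1"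
  shows "- ln (1 - y) \<le> y + y\<^sup>2 / (2 * (1 - y))"
proof -
  let ?g = "\<lambda>z::real. z + z\<^sup>2 / (2 * (1 - z)) + ln (1 - z)"
  have "?g 0 \<le> ?g y"
  proof (rule DERIV_nonneg_imp_nondecreasing[OF assms(1)])
    fix z :: real
    assume "0 \<le> z" "z \<le> y"
    then have "z < 1" using assms by auto
    have "DERIV ?g z :> z\<^sup>2 / (2 * (1 - z)\<^sup>2)"
    proof (rule DERIV_cong)
      show "DERIV ?g z :> 1 + (2 * z * (2 * (1 - z)) + z\<^sup>2 * 2) / (2 * (1 - z))\<^sup>2 - 1 / (1 - z)"
        using \<open>z < 1\<close> by (auto intro!: derivative_eq_intros simp: power2_eq_square)
      show "1 + (2 * z * (2 * (1 - z)) + z\<^sup>2 * 2) / (2 * (1 - z))\<^sup>2 - 1 / (1 - z)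
          = z\<^sup>2 / (2 * (1 - z)\<^sup>2)"
        using \<open>z < 1\<close> by (simp add: divide_simps) (simp add: algebra_simps power2_eq_square)
    qed
    then show "\<exists>g'. DERIV ?g z :> g' \<and> 0 \<le> g'" by auto
  qed
  then show ?thesis by simp
qed

lemma neg_ln_one_minus_ge:
  fixes y :: real
  assumes "0 \<le> y" "y < 1"
  shows "y + y\<^sup>2 / 2 \<le> - ln (1 - y)"
proof -
  let ?g = "\<lambda>z::real. - ln (1 - z) - z - z\<^sup>2 / 2"
  have "?g 0 \<le> ?g y"
  proof (rule DERIV_nonneg_imp_nondecreasing[OF assms(1)])
    fix z :: real
    assume "0 \<le> z" "z \<le> y"
    then have "z < 1" using assms by auto
    then have "DERIV ?g z :> z\<^sup>2 / (1 - z)"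
      by (auto intro!: derivative_eq_intros simp: field_simps power2_eq_square)
    then show "\<exists>g'. DERIV ?g z :> g' \<and> 0 \<le> g'"
      using \<open>z < 1\<close> by auto
  qed
  then show ?thesis by simp
qed

lemma one_minus_pow_mult_one_plus_le:
  fixes v :: real
  assumes "0 \<le> v" "v \<le> 1"
  shows "1 - (1 - v) ^ n * (1 + n * v) \<le> n * (n + 1) / 2 * v\<^sup>2"
proof (induction n)
  case 0
  then show ?case by simp
next
  case (Suc n)
  have "(1 - v) ^ n \<le> 1"
    using assms by (simp add: power_le_one)
  then have "(n + 1) * v\<^sup>2 * (1 - v) ^ n \<le> (n + 1) * v\<^sup>2"
    by (simp add: mult_left_le)
  moreover have "(1 - v) ^ Suc n * (1 + Suc n * v)
      = (1 - v) ^ n * (1 + n * v) - (n + 1) * v\<^sup>2 * (1 - v) ^ n"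
    by (simp add: algebra_simps power2_eq_square)
  ultimately show ?case
    using Suc by (simp add: algebra_simps power2_eq_square)
qed

lemma two_mult_le_two_pow_pred: "4 \<le> k \<Longrightarrow> 2 * real k \<le> 2 ^ (k - 1)"
proof (induction k rule: nat_induct_at_least)
  case base
  then show ?case by simp
next
  case (Suc k)
  then have "2 ^ (Suc k - 1) = (2::real) * 2 ^ (k - 1)"
    by (simp flip: power_Suc)
  with Suc show ?case by simp
qed

lemma two_mult_mult_pred_le_two_pow_pred: "4 \<le> k \<Longrightarrow> 2 * real k * (real k - 1) \<le> 3 * 2 ^ (k - 1)"
proof (induction k rule: nat_induct_at_least)
  case base
  then show ?case by simp
next
  case (Suc k)
  have "real k + 1 \<le> 2 * (real k - 1)"
    using Suc(1) by simp
  then have "2 * real k * (real k + 1) \<le> 2 * real k * (2 * (real k - 1))"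
    by (rule mult_left_mono) simp
  moreover have "2 ^ (Suc k - 1) = (2::real) * 2 ^ (k - 1)"
    using Suc(1) by (simp flip: power_Suc)
  ultimately show ?case
    using Suc(2) by (simp add: algebra_simps)
qed

lemma ln_2_ge_half: "1 / 2 \<le> ln (2::real)"
proof -
  have "ln (1 - 1 / 2) \<le> - (1 / 2 :: real)"
    by (rule ln_one_minus_pos_upper_bound) auto
  then show ?thesis
    by (simp add: ln_div)
qed

definition Phi_first_order :: "nat \<Rightarrow> real \<Rightarrow> real \<Rightarrow> real" where
  "Phi_first_order k d x = - ln (1 - x) + d * (1 - 1 / real k - 1 / d) * (2 * x ^ k)
      - (d - 1) * x ^ (k - 1)"

definition Phi_second_order :: "nat \<Rightarrow> real \<Rightarrow> real \<Rightarrow> real" where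
  "Phi_second_order k d x = d * (1 - 1 / real k - 1 / d) * (2 * x ^ k)\<^sup>2 / (2 * (1 - 2 * x ^ k))
      - (d - 1) * (x ^ (k - 1))\<^sup>2 / 2"

lemma Phi_le_first_plus_second_order:
  assumes "2 \<le> k" "0 \<le> x" "x \<le> 1 / 2"
    and "0 \<le> d * (1 - 1 / real k - 1 / d)" "1 \<le> d"
  shows "Phi k d x \<le> Phi_first_order k d x + Phi_second_order k d x"
proof -
  let ?a = "2 * x ^ k" and ?b = "x ^ (k - 1)" and ?c = "d * (1 - 1 / real k - 1 / d)"
  have "?b \<le> (1 / 2) ^ (k - 1)"
    using assms(2,3) by (intro power_mono)
  also have "\<dots> \<le> (1 / 2) ^ 1"
    using assms(1) by (intro power_decreasing) auto
  finally have b: "?b \<le> 1 / 2"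
    by simp
  have "?a = 2 * x * ?b"
    using assms(1) by (simp flip: power_Suc)
  also have "\<dots> \<le> ?b"
    using assms(2,3) by (simp add: mult_left_le_one_le)
  finally have "?a \<le> 1 / 2"
    using b by linarith
  then have "?c * (- ln (1 - ?a)) \<le> ?c * (?a + ?a\<^sup>2 / (2 * (1 - ?a)))"
    using assms(2,4) by (intro mult_left_mono neg_ln_one_minus_le) auto
  moreover have "(d - 1) * (?b + ?b\<^sup>2 / 2) \<le> (d - 1) * (- ln (1 - ?b))"
    using assms(2,5) b by (intro mult_left_mono neg_ln_one_minus_ge) auto
  ultimately show ?thesis
    unfolding Phi_def Phi_first_order_def Phi_second_order_def by (simp add: algebra_simps)
qed

lemma Phi_coefficients_nonneg:
  assumes "4 \<le> k"
  defines "d \<equiv> 2 ^ (k - 1) * real k * ln 2"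
  shows "1 \<le> d" and "0 \<le> d * (1 - 1 / real k - 1 / d)"
proof -
  have "8 \<le> (2::real) ^ (k - 1)"
    using assms(1) two_mult_le_two_pow_pred[OF assms(1)] by simp
  then have d: "8 * 4 * (1 / 2) \<le> d"
    unfolding d_def using assms(1) ln_2_ge_half by (intro mult_mono) auto
  then have "d * (1 - 1 / real k - 1 / d) = d * (1 - 1 / real k) - 1"
    by (simp add: algebra_simps)
  moreover have "d * (3 / 4) \<le> d * (1 - 1 / real k)"
    using d assms(1) by (intro mult_left_mono) (auto simp: field_simps)
  ultimately show "1 \<le> d" and "0 \<le> d * (1 - 1 / real k - 1 / d)"
    using d by linarith+
qed

lemma Phi_second_order_coefficient_gap:
  assumes "4 \<le> k"
  defines "d \<equiv> 2 ^ (k - 1) * real k * ln 2" and "t \<equiv> 1 / 2 ^ (k - 1)"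
  shows "d * (1 - 1 / real k) < (d - 1) * (1 - t)"
proof -
  have k: "2 * real k \<le> 2 ^ (k - 1)"
    using assms(1) by (rule two_mult_le_two_pow_pred)
  then have t: "0 < t" "t \<le> 1 / 8"
    unfolding t_def using assms(1) by (auto simp: field_simps)
  have "ln 2 * (real k * t) \<le> ln 2 * (1 / 2)"
    unfolding t_def using k by (intro mult_left_mono) (auto simp: field_simps)
  moreover have "(d * (1 - 1 / real k) - (d - 1) * (1 - t)) * t
      = ln 2 * (real k * t) + t - t\<^sup>2 - ln 2"
    using assms(1) unfolding d_def t_def by (simp add: field_simps power2_eq_square)
  ultimately have "(d * (1 - 1 / real k) - (d - 1) * (1 - t)) * t < 0"
    using t ln_2_ge_half zero_le_power2[of t] by linarith
  then show ?thesis
    using t by (simp add: mult_less_0_iff)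
qed

lemma Phi_second_order_neg:
  assumes "4 \<le> k" "0 < x" "x \<le> 1 / 2"
  defines "d \<equiv> 2 ^ (k - 1) * real k * ln 2"
  shows "Phi_second_order k d x < 0"
proof -
  define t :: real where "t = 1 / 2 ^ (k - 1)"
  let ?a = "2 * x ^ k" and ?b = "x ^ (k - 1)" and ?c = "d * (1 - 1 / real k - 1 / d)"
  have t: "t \<le> 1 / 8"
    unfolding t_def using two_mult_le_two_pow_pred[OF assms(1)] assms(1) by (auto simp: field_simps)
  have b: "0 < ?b" "?b \<le> t"
    unfolding t_def using assms(2,3) power_mono[of x "1/2" "k - 1"] by (auto simp: power_divide)
  have "?a = 2 * x * ?b"
    using assms(1) by (simp flip: power_Suc)
  then have a: "0 \<le> ?a" "?a \<le> ?b"
    using assms(2,3) b by (auto simp: mult_left_le_one_le)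
  have c: "0 \<le> ?c" "?c \<le> d * (1 - 1 / real k)"
    using Phi_coefficients_nonneg[OF assms(1), folded d_def] by (auto simp: algebra_simps)
  have "?a\<^sup>2 \<le> ?b\<^sup>2"
    using a by (intro power_mono)
  then have "0 \<le> ?a\<^sup>2 / (2 * (1 - ?a))" "?a\<^sup>2 / (2 * (1 - ?a)) \<le> ?b\<^sup>2 / (2 * (1 - t))"
    using a b t by (auto intro!: frac_le)
  then have "?c * (?a\<^sup>2 / (2 * (1 - ?a))) \<le> d * (1 - 1 / real k) * (?b\<^sup>2 / (2 * (1 - t)))"
    using c mult_mono' by blast
  also have "\<dots> < (d - 1) * (1 - t) * (?b\<^sup>2 / (2 * (1 - t)))"
    using Phi_second_order_coefficient_gap[OF assms(1), folded d_def t_def] assms(2) t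
    by (intro mult_strict_right_mono divide_pos_pos zero_less_power) auto
  also have "\<dots> = (d - 1) * ?b\<^sup>2 / 2"
    using t by (simp add: field_simps)
  finally show ?thesis
    unfolding Phi_second_order_def by simp
qed

lemma Phi_first_order_eq:
  assumes "1 \<le> k" "-1 < v"
  defines "d \<equiv> 2 ^ (k - 1) * real k * ln 2"
  shows "Phi_first_order k d ((1 - v) / 2)
    = ln 2 * (1 - (1 - v) ^ (k - 1) * (1 + real (k - 1) * v)) - ln (1 + v)
      + (1 - v) ^ (k - 1) * v / 2 ^ (k - 1)"
proof -
  define p where "p = (1 - v) ^ (k - 1)"
  define T :: real where "T = 2 ^ (k - 1)"
  have "d \<noteq> 0" "real k \<noteq> 0" "T \<noteq> 0"
    unfolding d_def T_def using assms(1) by auto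
  have "- ln (1 - (1 - v) / 2) = ln 2 - ln (1 + v)"
    using assms(2) by (simp add: ln_div field_simps)
  moreover have "2 * ((1 - v) / 2) ^ k = (1 - v) * p / T"
    unfolding p_def T_def using assms(1) by (cases k) (simp_all add: power_divide)
  moreover have "((1 - v) / 2) ^ (k - 1) = p / T"
    unfolding p_def T_def by (simp add: power_divide)
  moreover have "d * (1 - 1 / real k - 1 / d) * ((1 - v) * p / T) - (d - 1) * (p / T)
      = p * v / T - d / (real k * T) * p * (1 + (real k - 1) * v)"
    using \<open>d \<noteq> 0\<close> \<open>real k \<noteq> 0\<close> \<open>T \<noteq> 0\<close> by (simp add: field_simps)
  moreover have "d / (real k * T) = ln 2"
    unfolding d_def T_def using \<open>real k \<noteq> 0\<close> by simp
  ultimately have "Phi_first_order k d ((1 - v) / 2)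
      = ln 2 - ln (1 + v) + (p * v / T - ln 2 * p * (1 + (real k - 1) * v))"
    unfolding Phi_first_order_def by (simp only: diff_add_eq add_diff_eq)
  then show ?thesis
    unfolding p_def[symmetric] T_def[symmetric] using assms(1)
    by (simp add: of_nat_diff algebra_simps)
qed

lemma Phi_first_order_nonpos:
  assumes "4 \<le> k" "1 / 2 - 1 / 2 ^ k \<le> x" "x \<le> 1 / 2"
  shows "Phi_first_order k (2 ^ (k - 1) * real k * ln 2) x \<le> 0"
proof -
  define t :: real where "t = 1 / 2 ^ (k - 1)"
  define v where "v = 1 - 2 * x"
  have "2 * real k \<le> 2 ^ (k - 1)"
    using assms(1) by (rule two_mult_le_two_pow_pred)
  then have t: "t \<le> 1 / 8"
    unfolding t_def using assms(1) by (auto simp: field_simps)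
  have "(2::real) ^ k = 2 * 2 ^ (k - 1)"
    using assms(1) by (cases k) auto
  then have v: "0 \<le> v" "v \<le> t"
    unfolding v_def t_def using assms(2,3) by (auto simp: field_simps)
  have p: "0 \<le> (1 - v) ^ (k - 1)" "(1 - v) ^ (k - 1) \<le> 1"
    using v t by (auto simp: power_le_one)
  have x: "x = (1 - v) / 2"
    unfolding v_def by simp
  have "ln 2 * (1 - (1 - v) ^ (k - 1) * (1 + real (k - 1) * v))
      \<le> ln 2 * (real (k - 1) * (real (k - 1) + 1) / 2 * v\<^sup>2)"
    using v t by (intro mult_left_mono one_minus_pow_mult_one_plus_le) auto
  also have "\<dots> \<le> 1 * (real (k - 1) * (real (k - 1) + 1) / 2 * v\<^sup>2)"
    using ln_2_less_1 by (intro mult_right_mono) auto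
  also have "\<dots> = (real k * (real k - 1) * t / 2) * (v / t) * v"
    unfolding t_def using assms(1) by (simp add: of_nat_diff power2_eq_square)
  also have "\<dots> \<le> 3 / 4 * 1 * v"
    using two_mult_mult_pred_le_two_pow_pred[OF assms(1)] v assms(1) unfolding t_def
    by (intro mult_mono) (auto simp: field_simps)
  finally have leading: "ln 2 * (1 - (1 - v) ^ (k - 1) * (1 + real (k - 1) * v)) \<le> 3 / 4 * v"
    by simp
  have "(1 - v) ^ (k - 1) * v / 2 ^ (k - 1) = (1 - v) ^ (k - 1) * v * t"
    by (simp add: t_def)
  also have "\<dots> \<le> 1 * v * (1 / 8)"
    using p v t by (intro mult_mono) auto
  finally have tail: "(1 - v) ^ (k - 1) * v / 2 ^ (k - 1) \<le> v / 8"
    by simp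
  have "v - v\<^sup>2 \<le> ln (1 + v)"
    using v t by (intro ln_one_plus_pos_lower_bound) auto
  moreover have "v\<^sup>2 \<le> (1 / 8) * v"
    using v t unfolding power2_eq_square by (intro mult_right_mono) auto
  ultimately have log: "- ln (1 + v) \<le> - v + v / 8"
    by simp
  have "Phi_first_order k (2 ^ (k - 1) * real k * ln 2) x
      = ln 2 * (1 - (1 - v) ^ (k - 1) * (1 + real (k - 1) * v)) - ln (1 + v)
        + (1 - v) ^ (k - 1) * v / 2 ^ (k - 1)"
    unfolding x using assms(1) v by (intro Phi_first_order_eq) auto
  also have "\<dots> \<le> 3 / 4 * v + (- v + v / 8) + v / 8"
    using leading tail log by linarith
  finally show ?thesis
    by simp
qed

theorem lemma3p6:
  fixes k :: nat and x :: real
  assumes "k \<ge> 4"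
    and "1/2 - 1 / 2 ^ k \<le> x" and "x \<le> 1/2"
  shows "Phi k (2 ^ (k - 1) * real k * ln 2) x < 0"
proof -
  have "(2::real) ^ 4 \<le> 2 ^ k"
    using assms(1) by (intro power_increasing) auto
  then have "1 / 2 ^ k \<le> (1::real) / 16"
    by (simp add: field_simps)
  then have "0 < x"
    using assms(2) by linarith
  then have "Phi k (2 ^ (k - 1) * real k * ln 2) x
      \<le> Phi_first_order k (2 ^ (k - 1) * real k * ln 2) x
        + Phi_second_order k (2 ^ (k - 1) * real k * ln 2) x"
    using assms Phi_coefficients_nonneg[OF assms(1)] by (intro Phi_le_first_plus_second_order) auto
  also have "\<dots> < 0"
    using Phi_first_order_nonpos[OF assms] Phi_second_order_neg[OF assms(1) \<open>0 < x\<close> assms(3)]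
    by linarith
  finally show ?thesis .
qed

end
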